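(* Let $G_o=(V,E)$ be an oriented graph with $|V|=n$ and induced partial order $P$ on $V$. Define $g:\hat E\to\mathbb{R}_{\ge0}$ by: for $(u,v)\in E$, $g(u,v)$ is the number of linear extensions $\sigma$ of $P$ with $\sigma(u)=\sigma(v)-1$; for $v\in V$ with out-degree $0$ in $G_o$, $g(v,\hat1)$ is the number of linear extensions $\sigma$ of $P$ with $\sigma(v)=n$; for $v\in V$ with in-degree $0$ in $G_o$, $g(\hat0,v)$ is the number of linear extensions $\sigma$ of $P$ with $\sigma(v)=1$. Then $g$ is a natural flow on $G_o$, and the net $g$-flow from $\hat0$ to $\hat1$ equals $e(P)$, the number of linear extensions of $P$.
   Context: An oriented graph $G_o=(V,E)$ is a simple connected undirected graph together with an acyclic orientation of its edges, regarded as a directed graph (each member of $E$ is an ordered pair). Its induced partial order is: $u<v$ iff there is a directed path from $u$ to $v$. $\hat G_o$ is the directed graph on vertex set $V\cup\{\hat0,\hat1\}$ whose directed edge set $\hat E$ is $E$ together with all edges $(v,\hat1)$ for $v\in V$ of out-degree $0$ in $G_o$ and all edges $(\hat0,v)$ for $v\in V$ of in-degree $0$ in $G_o$. A natural flow on $G_o$ is a function $f:\hat E\to\mathbb{R}_{\ge0}$ such that for every $v\in V$, $\sum_{(x,v)\in\hat E}f(x,v)=\sum_{(v,y)\in\hat E}f(v,y)$ (a nonnegative network flow on $\hat G_o$ with source $\hat0$, sink $\hat1$ and infinite capacities). A linear extension of a partial order $P$ on an $n$-element set $V$ is a bijection $\sigma:V\to[n]$ such that $u<_P v$ implies $\sigma(u)<\sigma(v)$.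 *)

theory Defs
  imports Complex_Main "HOL-Library.FuncSet"
begin

definition oriented_graph :: "'a set \<Rightarrow> ('a \<times> 'a) set \<Rightarrow> bool" where
  "oriented_graph V E \<longleftrightarrow>
     finite V \<and> V \<noteq> {} \<and> E \<subseteq> V \<times> V \<and>
     (\<forall>v. (v, v) \<notin> E) \<and>
     (\<forall>u v. (u, v) \<in> E \<longrightarrow> (v, u) \<notin> E) \<and>
     acyclic E \<and>
     (\<forall>u\<in>V. \<forall>v\<in>V. (u, v) \<in> (E \<union> E\<inverse>)\<^sup>*)"

definition induced_less :: "('a \<times> 'a) set \<Rightarrow> 'a \<Rightarrow> 'a \<Rightarrow> bool" where
  "induced_less E u v \<longleftrightarrow> (u, v) \<in> E\<^sup>+"

datatype 'a hatv = HZero | Vtx 'a | HOne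

definition out_degree :: "('a \<times> 'a) set \<Rightarrow> 'a \<Rightarrow> nat" where
  "out_degree E v = card {w. (v, w) \<in> E}"

definition in_degree :: "('a \<times> 'a) set \<Rightarrow> 'a \<Rightarrow> nat" where
  "in_degree E v = card {u. (u, v) \<in> E}"

definition hat_edges :: "'a set \<Rightarrow> ('a \<times> 'a) set \<Rightarrow> ('a hatv \<times> 'a hatv) set" where
  "hat_edges V E =
     {(Vtx u, Vtx v) | u v. (u, v) \<in> E}
     \<union> {(Vtx v, HOne) | v. v \<in> V \<and> out_degree E v = 0}
     \<union> {(HZero, Vtx v) | v. v \<in> V \<and> in_degree E v = 0}"

definition natural_flow :: "'a set \<Rightarrow> ('a \<times> 'a) set \<Rightarrow> ('a hatv \<times> 'a hatv \<Rightarrow> real) \<Rightarrow> bool" where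
  "natural_flow V E f \<longleftrightarrow>
     (\<forall>e\<in>hat_edges V E. f e \<ge> 0) \<and>
     (\<forall>v\<in>V. (\<Sum>e\<in>{e\<in>hat_edges V E. snd e = Vtx v}. f e)
            = (\<Sum>e\<in>{e\<in>hat_edges V E. fst e = Vtx v}. f e))"

text \<open>Net flow from \<open>\<hat>0\<close> to \<open>\<hat>1\<close>: total flow leaving the source \<open>\<hat>0\<close> (which has no incoming edges).\<close>
definition net_flow :: "'a set \<Rightarrow> ('a \<times> 'a) set \<Rightarrow> ('a hatv \<times> 'a hatv \<Rightarrow> real) \<Rightarrow> real" where
  "net_flow V E f = (\<Sum>e\<in>{e\<in>hat_edges V E. fst e = HZero}. f e)"

text \<open>Linear extensions of the partial order induced by E, as bijections V \<rightarrow> {1..n}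
 (taken extensional, i.e. undefined outside V, so that they are counted correctly).\<close>
definition linear_extensions :: "'a set \<Rightarrow> ('a \<times> 'a) set \<Rightarrow> ('a \<Rightarrow> nat) set" where
  "linear_extensions V E =
     {\<sigma> \<in> V \<rightarrow>\<^sub>E {1..card V}. bij_betw \<sigma> V {1..card V} \<and>
        (\<forall>u\<in>V. \<forall>v\<in>V. induced_less E u v \<longrightarrow> \<sigma> u < \<sigma> v)}"

definition num_linext :: "'a set \<Rightarrow> ('a \<times> 'a) set \<Rightarrow> nat" where
  "num_linext V E = card (linear_extensions V E)"

definition g_flow :: "'a set \<Rightarrow> ('a \<times> 'a) set \<Rightarrow> 'a hatv \<times> 'a hatv \<Rightarrow> real" where
  "g_flow V E e =
     (if e \<notin> hat_edges V E then 0 else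
      (case e of
         (Vtx u, Vtx v) \<Rightarrow> real (card {\<sigma> \<in> linear_extensions V E. \<sigma> u = \<sigma> v - 1})
       | (Vtx v, HOne) \<Rightarrow> real (card {\<sigma> \<in> linear_extensions V E. \<sigma> v = card V})
       | (HZero, Vtx v) \<Rightarrow> real (card {\<sigma> \<in> linear_extensions V E. \<sigma> v = 1})
       | _ \<Rightarrow> 0))"

end

theory Submission imports Defs "HOL-Combinatorics.Transposition" begin

(* Write c(u,v) for the number of linear extensions in which u immediately precedes v.  Every extension either puts v first or has a unique immediate
   predecessor of v, so  #(v first) + \<Sum>_{u\<in>V} c(u,v) = e(P); dually
   #(v last) + \<Sum>_{u\<in>V} c(v,u) = e(P).  For a vertex u not adjacent to v the
   transposition of u and v turns extensions with u right before v into extensions with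
   v right before u (u,v are incomparable: a comparable pair in adjacent positions is an
   edge), so c(u,v) = c(v,u); against an edge, c vanishes.  Hence the non-neighbour parts
   of the two sums agree, and what remains is exactly in-flow = out-flow.  Every extension puts exactly one vertex first, and that vertex is a source,
   so the flow leaving \<hat>0 is e(P). *)

lemma linear_extensionD:
  assumes "\<sigma> \<in> linear_extensions V E"
  shows "\<sigma> \<in> V \<rightarrow>\<^sub>E {1..card V}" and "bij_betw \<sigma> V {1..card V}" and "inj_on \<sigma> V"
    and "\<And>u. u \<in> V \<Longrightarrow> 1 \<le> \<sigma> u \<and> \<sigma> u \<le> card V"
    and "\<And>u v. u \<in> V \<Longrightarrow> v \<in> V \<Longrightarrow> (u, v) \<in> E\<^sup>+ \<Longrightarrow> \<sigma> u < \<sigma> v"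
  using assms unfolding linear_extensions_def induced_less_def bij_betw_def
  by (auto simp: PiE_iff)

lemma linear_extension_position:
  assumes "\<sigma> \<in> linear_extensions V E" and "k \<in> {1..card V}"
  obtains u where "u \<in> V" and "\<sigma> u = k"
proof -
  have "k \<in> \<sigma> ` V" using assms linear_extensionD(2)[OF assms(1)] by (simp add: bij_betw_def)
  then show ?thesis using that by blast
qed

lemma finite_linear_extensions:
  assumes "finite V"
  shows "finite (linear_extensions V E)"
  by (rule finite_subset[of _ "V \<rightarrow>\<^sub>E {1..card V}"])
     (use assms in \<open>auto simp: linear_extensions_def intro: finite_PiE\<close>)

text \<open>Two comparable vertices in adjacent positions of an extension form an edge:
  an intermediate vertex on a longer path would need a position strictly in between.\<close>
lemma adjacent_comparable_is_edge:
  assumes "E \<subseteq> V \<times> V" and \<sigma>: "\<sigma> \<in> linear_extensions V E" and "u \<in> V" "v \<in> V"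
    and adj: "\<sigma> u + 1 = \<sigma> v" and path: "(u, v) \<in> E\<^sup>+"
  shows "(u, v) \<in> E"
proof (rule ccontr)
  assume "(u, v) \<notin> E"
  with path obtain y where uy: "(u, y) \<in> E" and yv: "(y, v) \<in> E\<^sup>+"
    by (metis converse_tranclE)
  have "y \<in> V" using uy assms(1) by auto
  have "\<sigma> u < \<sigma> y" using linear_extensionD(5)[OF \<sigma> \<open>u \<in> V\<close> \<open>y \<in> V\<close>] uy by auto
  moreover have "\<sigma> y < \<sigma> v" using linear_extensionD(5)[OF \<sigma> \<open>y \<in> V\<close> \<open>v \<in> V\<close> yv] .
  ultimately show False using adj by auto
qed

lemma swap_adjacent_linear_extension:
  assumes \<sigma>: "\<sigma> \<in> linear_extensions V E" and a: "a \<in> V" and b: "b \<in> V"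
    and adj: "\<sigma> a + 1 = \<sigma> b" and incomp: "(a, b) \<notin> E\<^sup>+"
  shows "\<sigma> \<circ> transpose a b \<in> linear_extensions V E"
proof -
  note m = linear_extensionD[OF \<sigma>]
  have ext: "\<sigma> \<circ> transpose a b \<in> V \<rightarrow>\<^sub>E {1..card V}"
    using m(1) a b by (auto simp: PiE_iff transpose_def extensional_def)
  have bij: "bij_betw (\<sigma> \<circ> transpose a b) V {1..card V}"
    by (rule bij_betw_trans[OF _ m(2)])
       (use a b in \<open>auto simp: bij_betw_def inj_on_def transpose_def\<close>)
  have "\<sigma> (transpose a b x) < \<sigma> (transpose a b y)"
    if x: "x \<in> V" and y: "y \<in> V" and xy: "(x, y) \<in> E\<^sup>+" for x y
  proof -
    have lt: "\<sigma> x < \<sigma> y" using m(5)[OF x y xy] .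
    have same_pos: "\<sigma> z = \<sigma> z' \<longleftrightarrow> z = z'" if "z \<in> V" "z' \<in> V" for z z'
      using m(3) that by (auto simp: inj_on_def)
    have "\<not> (x = a \<and> y = b)" using xy incomp by auto
    moreover have "\<not> (x = b \<and> y = a)" using lt adj by auto
    ultimately show ?thesis
      using lt adj same_pos[OF x a] same_pos[OF x b] same_pos[OF y a] same_pos[OF y b]
      unfolding transpose_def by auto
  qed
  then show ?thesis
    using ext bij unfolding linear_extensions_def induced_less_def by auto
qed

section \<open>Counting immediate precedences\<close>

definition prec_count :: "'a set \<Rightarrow> ('a \<times> 'a) set \<Rightarrow> 'a \<Rightarrow> 'a \<Rightarrow> nat" where
  "prec_count V E u v = card {\<sigma> \<in> linear_extensions V E. \<sigma> u + 1 = \<sigma> v}"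

text \<open>For non-adjacent u, v the transposition of u and v injects the extensions with u
  right before v into those with v right before u.\<close>
lemma prec_count_swap_le:
  assumes EV: "E \<subseteq> V \<times> V" and fin: "finite V" and u: "u \<in> V" and v: "v \<in> V"
    and nonadj: "(u, v) \<notin> E"
  shows "prec_count V E u v \<le> prec_count V E v u"
  unfolding prec_count_def
proof (rule card_inj_on_le)
  let ?swap = "\<lambda>\<sigma>. \<sigma> \<circ> transpose u v"
  show "inj_on ?swap {\<sigma> \<in> linear_extensions V E. \<sigma> u + 1 = \<sigma> v}"
    by (rule inj_onI) (metis comp_assoc comp_id transpose_comp_involutory)
  show "?swap ` {\<sigma> \<in> linear_extensions V E. \<sigma> u + 1 = \<sigma> v}
          \<subseteq> {\<sigma> \<in> linear_extensions V E. \<sigma> v + 1 = \<sigma> u}"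
  proof clarify
    fix \<sigma> assume \<sigma>: "\<sigma> \<in> linear_extensions V E" and adj: "\<sigma> u + 1 = \<sigma> v"
    have "(u, v) \<notin> E\<^sup>+" using adjacent_comparable_is_edge[OF EV \<sigma> u v adj] nonadj by blast
    then show "?swap \<sigma> \<in> linear_extensions V E \<and> ?swap \<sigma> v + 1 = ?swap \<sigma> u"
      using swap_adjacent_linear_extension[OF \<sigma> u v adj] adj by auto
  qed
  show "finite {\<sigma> \<in> linear_extensions V E. \<sigma> v + 1 = \<sigma> u}"
    using finite_linear_extensions[OF fin] by simp
qed

lemma prec_count_swap:
  assumes "E \<subseteq> V \<times> V" and "finite V" and "u \<in> V" and "v \<in> V"
    and "(u, v) \<notin> E" and "(v, u) \<notin> E"
  shows "prec_count V E u v = prec_count V E v u"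
  using prec_count_swap_le[of E V u v] prec_count_swap_le[of E V v u] assms by simp

lemma prec_count_against_edge:
  assumes "(u, v) \<in> E" and "u \<in> V" and "v \<in> V"
  shows "prec_count V E v u = 0"
proof -
  have "\<sigma> v + 1 \<noteq> \<sigma> u" if "\<sigma> \<in> linear_extensions V E" for \<sigma>
    using linear_extensionD(5)[OF that \<open>u \<in> V\<close> \<open>v \<in> V\<close> r_into_trancl[OF assms(1)]]
    by simp
  then have none: "{\<sigma> \<in> linear_extensions V E. \<sigma> v + 1 = \<sigma> u} = {}" by blast
  show ?thesis unfolding prec_count_def none by (rule card.empty)
qed

lemma sum_card_unique_witness:
  assumes "finite S" and "finite V"
    and unique: "\<And>\<sigma> u u'. \<sigma> \<in> S \<Longrightarrow> u \<in> V \<Longrightarrow> u' \<in> V \<Longrightarrow> R \<sigma> u \<Longrightarrow> R \<sigma> u' \<Longrightarrow> u = u'"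
  shows "(\<Sum>u\<in>V. card {\<sigma> \<in> S. R \<sigma> u}) = card {\<sigma> \<in> S. \<exists>u\<in>V. R \<sigma> u}"
proof -
  have "{\<sigma> \<in> S. \<exists>u\<in>V. R \<sigma> u} = (\<Union>u\<in>V. {\<sigma> \<in> S. R \<sigma> u})" by blast
  moreover have "card (\<Union>u\<in>V. {\<sigma> \<in> S. R \<sigma> u}) = (\<Sum>u\<in>V. card {\<sigma> \<in> S. R \<sigma> u})"
    by (rule card_UN_disjoint) (use assms in auto)
  ultimately show ?thesis by simp
qed

text \<open>An extension either places v first or gives v a unique immediate predecessor.\<close>
lemma first_plus_predecessors:
  assumes fin: "finite V" and v: "v \<in> V"
  shows "card {\<sigma> \<in> linear_extensions V E. \<sigma> v = 1} + (\<Sum>u\<in>V. prec_count V E u v)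
           = card (linear_extensions V E)"
proof -
  let ?L = "linear_extensions V E"
  have finL: "finite ?L" using finite_linear_extensions[OF fin] .
  have "(\<Sum>u\<in>V. prec_count V E u v) = card {\<sigma> \<in> ?L. \<exists>u\<in>V. \<sigma> u + 1 = \<sigma> v}"
    unfolding prec_count_def
    by (rule sum_card_unique_witness[OF finL fin])
       (auto dest: linear_extensionD(3) simp: inj_on_def)
  also have "{\<sigma> \<in> ?L. \<exists>u\<in>V. \<sigma> u + 1 = \<sigma> v} = ?L - {\<sigma> \<in> ?L. \<sigma> v = 1}"
  proof (intro equalityI subsetI)
    fix \<sigma> assume "\<sigma> \<in> ?L - {\<sigma> \<in> ?L. \<sigma> v = 1}"
    then have \<sigma>: "\<sigma> \<in> ?L" and "\<sigma> v \<noteq> 1" by auto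
    then have "\<sigma> v - 1 \<in> {1..card V}" using linear_extensionD(4)[OF \<sigma> v] by auto
    then obtain u where "u \<in> V" "\<sigma> u = \<sigma> v - 1" by (rule linear_extension_position[OF \<sigma>])
    then show "\<sigma> \<in> {\<sigma> \<in> ?L. \<exists>u\<in>V. \<sigma> u + 1 = \<sigma> v}"
      using \<sigma> \<open>\<sigma> v \<noteq> 1\<close> linear_extensionD(4)[OF \<sigma> v] by force
  qed (auto dest!: linear_extensionD(4))
  also have "card (?L - {\<sigma> \<in> ?L. \<sigma> v = 1}) = card ?L - card {\<sigma> \<in> ?L. \<sigma> v = 1}"
    by (rule card_Diff_subset) (use finL in auto)
  finally show ?thesis
    using card_mono[OF finL, of "{\<sigma> \<in> ?L. \<sigma> v = 1}"] by auto
qed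

text \<open>Dually, an extension either places v last or gives v a unique immediate successor.\<close>
lemma last_plus_successors:
  assumes fin: "finite V" and v: "v \<in> V"
  shows "card {\<sigma> \<in> linear_extensions V E. \<sigma> v = card V} + (\<Sum>u\<in>V. prec_count V E v u)
           = card (linear_extensions V E)"
proof -
  let ?L = "linear_extensions V E"
  have finL: "finite ?L" using finite_linear_extensions[OF fin] .
  have "(\<Sum>u\<in>V. prec_count V E v u) = card {\<sigma> \<in> ?L. \<exists>u\<in>V. \<sigma> v + 1 = \<sigma> u}"
    unfolding prec_count_def
    by (rule sum_card_unique_witness[OF finL fin])
       (auto dest: linear_extensionD(3) simp: inj_on_def)
  also have "{\<sigma> \<in> ?L. \<exists>u\<in>V. \<sigma> v + 1 = \<sigma> u} = ?L - {\<sigma> \<in> ?L. \<sigma> v = card V}"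
  proof (intro equalityI subsetI)
    fix \<sigma> assume "\<sigma> \<in> ?L - {\<sigma> \<in> ?L. \<sigma> v = card V}"
    then have \<sigma>: "\<sigma> \<in> ?L" and "\<sigma> v \<noteq> card V" by auto
    then have "\<sigma> v + 1 \<in> {1..card V}" using linear_extensionD(4)[OF \<sigma> v] by auto
    then obtain u where "u \<in> V" "\<sigma> u = \<sigma> v + 1" by (rule linear_extension_position[OF \<sigma>])
    then show "\<sigma> \<in> {\<sigma> \<in> ?L. \<exists>u\<in>V. \<sigma> v + 1 = \<sigma> u}" using \<sigma> by force
  qed (auto dest!: linear_extensionD(4))
  also have "card (?L - {\<sigma> \<in> ?L. \<sigma> v = card V}) = card ?L - card {\<sigma> \<in> ?L. \<sigma> v = card V}"
    by (rule card_Diff_subset) (use finL in auto)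
  finally show ?thesis
    using card_mono[OF finL, of "{\<sigma> \<in> ?L. \<sigma> v = card V}"] by auto
qed

text \<open>The non-neighbour contributions to the
  two decompositions of e(P) cancel by the swap argument.\<close>
lemma local_balance:
  assumes EV: "E \<subseteq> V \<times> V" and fin: "finite V" and v: "v \<in> V"
  shows "card {\<sigma> \<in> linear_extensions V E. \<sigma> v = 1} + (\<Sum>u\<in>{u. (u, v) \<in> E}. prec_count V E u v)
       = card {\<sigma> \<in> linear_extensions V E. \<sigma> v = card V} + (\<Sum>u\<in>{u. (v, u) \<in> E}. prec_count V E v u)"
proof -
  define In where "In = {u. (u, v) \<in> E}"
  define Out where "Out = {u. (v, u) \<in> E}"
  have In: "In \<subseteq> V" and Out: "Out \<subseteq> V" using EV by (auto simp: In_def Out_def)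
  define Far where "Far = V - In - Out"
  have "(\<Sum>u\<in>V. prec_count V E u v) = (\<Sum>u\<in>V - In. prec_count V E u v) + (\<Sum>u\<in>In. prec_count V E u v)"
    by (rule sum.subset_diff[OF In fin])
  also have "(\<Sum>u\<in>V - In. prec_count V E u v) = (\<Sum>u\<in>Far. prec_count V E u v)"
    by (rule sum.mono_neutral_right)
       (use fin Out in \<open>auto simp: Far_def Out_def intro!: prec_count_against_edge[OF _ v]\<close>)
  finally have pred: "(\<Sum>u\<in>V. prec_count V E u v)
      = (\<Sum>u\<in>Far. prec_count V E u v) + (\<Sum>u\<in>In. prec_count V E u v)" .
  have "(\<Sum>u\<in>V. prec_count V E v u) = (\<Sum>u\<in>V - Out. prec_count V E v u) + (\<Sum>u\<in>Out. prec_count V E v u)"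
    by (rule sum.subset_diff[OF Out fin])
  also have "(\<Sum>u\<in>V - Out. prec_count V E v u) = (\<Sum>u\<in>Far. prec_count V E v u)"
    by (rule sum.mono_neutral_right)
       (use fin In in \<open>auto simp: Far_def In_def intro!: prec_count_against_edge[OF _ _ v]\<close>)
  finally have succ: "(\<Sum>u\<in>V. prec_count V E v u)
      = (\<Sum>u\<in>Far. prec_count V E v u) + (\<Sum>u\<in>Out. prec_count V E v u)" .
  have far: "(\<Sum>u\<in>Far. prec_count V E u v) = (\<Sum>u\<in>Far. prec_count V E v u)"
    by (rule sum.cong) (auto simp: Far_def In_def Out_def intro!: prec_count_swap[OF EV fin _ v])
  show ?thesis
    using first_plus_predecessors[OF fin v, of E] last_plus_successors[OF fin v, of E] pred succ far
    unfolding In_def Out_def by linarith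
qed

lemma edge_not_first_last:
  assumes "(u, v) \<in> E" and "u \<in> V" and "v \<in> V" and \<sigma>: "\<sigma> \<in> linear_extensions V E"
  shows "\<sigma> v \<noteq> 1" and "\<sigma> u \<noteq> card V"
  using linear_extensionD(5)[OF \<sigma> \<open>u \<in> V\<close> \<open>v \<in> V\<close> r_into_trancl[OF assms(1)]]
    linear_extensionD(4)[OF \<sigma> \<open>u \<in> V\<close>] linear_extensionD(4)[OF \<sigma> \<open>v \<in> V\<close>]
  by auto

lemma g_flow_edge:
  assumes "(u, v) \<in> E" and "u \<in> V"
  shows "g_flow V E (Vtx u, Vtx v) = real (prec_count V E u v)"
proof -
  have "{\<sigma> \<in> linear_extensions V E. \<sigma> u = \<sigma> v - 1} = {\<sigma> \<in> linear_extensions V E. \<sigma> u + 1 = \<sigma> v}"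
    using linear_extensionD(4)[OF _ \<open>u \<in> V\<close>] by fastforce
  then show ?thesis using assms(1) by (auto simp: g_flow_def hat_edges_def prec_count_def)
qed

lemma g_inflow:
  assumes EV: "E \<subseteq> V \<times> V" and fin: "finite V" and v: "v \<in> V"
  shows "(\<Sum>e\<in>{e \<in> hat_edges V E. snd e = Vtx v}. g_flow V E e)
       = real (card {\<sigma> \<in> linear_extensions V E. \<sigma> v = 1} + (\<Sum>u\<in>{u. (u, v) \<in> E}. prec_count V E u v))"
proof -
  define In where "In = {u. (u, v) \<in> E}"
  have finIn: "finite In" using EV fin by (auto simp: In_def intro: finite_subset)
  have deg: "in_degree E v = 0 \<longleftrightarrow> In = {}" using finIn by (simp add: in_degree_def In_def)
  show ?thesis
  proof (cases "In = {}")
    case True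
    then have "{e \<in> hat_edges V E. snd e = Vtx v} = {(HZero, Vtx v)}"
      using v deg by (auto simp: hat_edges_def In_def)
    then show ?thesis using True v deg by (simp add: g_flow_def hat_edges_def In_def)
  next
    case False
    then obtain u where uv: "(u, v) \<in> E" by (auto simp: In_def)
    then have "u \<in> V" using EV by auto
    then have none: "{\<sigma> \<in> linear_extensions V E. \<sigma> v = 1} = {}"
      using edge_not_first_last(1)[OF uv _ v] by blast
    have "card {\<sigma> \<in> linear_extensions V E. \<sigma> v = 1} = 0"
      unfolding none by (rule card.empty)
    moreover have "{e \<in> hat_edges V E. snd e = Vtx v} = (\<lambda>u. (Vtx u, Vtx v)) ` In"
      using False deg by (auto simp: hat_edges_def In_def)
    moreover have "(\<Sum>e\<in>(\<lambda>u. (Vtx u, Vtx v)) ` In. g_flow V E e) = (\<Sum>u\<in>In. g_flow V E (Vtx u, Vtx v))"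
      by (simp add: sum.reindex inj_on_def)
    moreover have "\<dots> = (\<Sum>u\<in>In. real (prec_count V E u v))"
      using EV by (intro sum.cong refl g_flow_edge) (auto simp: In_def)
    ultimately show ?thesis by (simp add: In_def)
  qed
qed

lemma g_outflow:
  assumes EV: "E \<subseteq> V \<times> V" and fin: "finite V" and v: "v \<in> V"
  shows "(\<Sum>e\<in>{e \<in> hat_edges V E. fst e = Vtx v}. g_flow V E e)
       = real (card {\<sigma> \<in> linear_extensions V E. \<sigma> v = card V} + (\<Sum>u\<in>{u. (v, u) \<in> E}. prec_count V E v u))"
proof -
  define Out where "Out = {u. (v, u) \<in> E}"
  have finOut: "finite Out" using EV fin by (auto simp: Out_def intro: finite_subset)
  have deg: "out_degree E v = 0 \<longleftrightarrow> Out = {}" using finOut by (simp add: out_degree_def Out_def)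
  show ?thesis
  proof (cases "Out = {}")
    case True
    then have "{e \<in> hat_edges V E. fst e = Vtx v} = {(Vtx v, HOne)}"
      using v deg by (auto simp: hat_edges_def Out_def)
    then show ?thesis using True v deg by (simp add: g_flow_def hat_edges_def Out_def)
  next
    case False
    then obtain u where vu: "(v, u) \<in> E" by (auto simp: Out_def)
    then have "u \<in> V" using EV by auto
    then have none: "{\<sigma> \<in> linear_extensions V E. \<sigma> v = card V} = {}"
      using edge_not_first_last(2)[OF vu v] by blast
    have "card {\<sigma> \<in> linear_extensions V E. \<sigma> v = card V} = 0"
      unfolding none by (rule card.empty)
    moreover have "{e \<in> hat_edges V E. fst e = Vtx v} = (\<lambda>u. (Vtx v, Vtx u)) ` Out"
      using False deg by (auto simp: hat_edges_def Out_def)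
    moreover have "(\<Sum>e\<in>(\<lambda>u. (Vtx v, Vtx u)) ` Out. g_flow V E e) = (\<Sum>u\<in>Out. g_flow V E (Vtx v, Vtx u))"
      by (simp add: sum.reindex inj_on_def)
    moreover have "\<dots> = (\<Sum>u\<in>Out. real (prec_count V E v u))"
      using v by (intro sum.cong refl g_flow_edge) (auto simp: Out_def)
    ultimately show ?thesis by (simp add: Out_def)
  qed
qed

text \<open>The flow leaving \<hat>0 counts every extension once, via its first vertex, which is
  necessarily a source.\<close>
lemma g_net_flow:
  assumes EV: "E \<subseteq> V \<times> V" and fin: "finite V" and ne: "V \<noteq> {}"
  shows "net_flow V E (g_flow V E) = real (num_linext V E)"
proof -
  let ?L = "linear_extensions V E"
  define Src where "Src = {v \<in> V. in_degree E v = 0}"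
  have finL: "finite ?L" using finite_linear_extensions[OF fin] .
  have sources: "{e \<in> hat_edges V E. fst e = HZero} = (\<lambda>v. (HZero, Vtx v)) ` Src"
    unfolding hat_edges_def Src_def by auto
  have "net_flow V E (g_flow V E) = (\<Sum>v\<in>Src. g_flow V E (HZero, Vtx v))"
    unfolding net_flow_def sources by (simp add: sum.reindex inj_on_def)
  also have "\<dots> = (\<Sum>v\<in>Src. real (card {\<sigma> \<in> ?L. \<sigma> v = 1}))"
    by (rule sum.cong) (auto simp: g_flow_def hat_edges_def Src_def)
  also have "\<dots> = (\<Sum>v\<in>V. real (card {\<sigma> \<in> ?L. \<sigma> v = 1}))"
  proof (rule sum.mono_neutral_left[OF fin])
    show "\<forall>v\<in>V - Src. real (card {\<sigma> \<in> ?L. \<sigma> v = 1}) = 0"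
    proof
      fix v assume "v \<in> V - Src"
      then have "v \<in> V" and "in_degree E v \<noteq> 0" by (auto simp: Src_def)
      then have "{u. (u, v) \<in> E} \<noteq> {}" unfolding in_degree_def by (metis card.empty)
      then obtain u where uv: "(u, v) \<in> E" by blast
      then have "u \<in> V" using EV by auto
      then have none: "{\<sigma> \<in> ?L. \<sigma> v = 1} = {}"
        using edge_not_first_last(1)[OF uv _ \<open>v \<in> V\<close>] by blast
      show "real (card {\<sigma> \<in> ?L. \<sigma> v = 1}) = 0" unfolding none by simp
    qed
  qed (auto simp: Src_def)
  also have "\<dots> = real (\<Sum>v\<in>V. card {\<sigma> \<in> ?L. \<sigma> v = 1})"
    by simp
  also have "(\<Sum>v\<in>V. card {\<sigma> \<in> ?L. \<sigma> v = 1}) = card {\<sigma> \<in> ?L. \<exists>v\<in>V. \<sigma> v = 1}"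
    by (rule sum_card_unique_witness[OF finL fin])
       (auto dest: linear_extensionD(3) simp: inj_on_def)
  also have "{\<sigma> \<in> ?L. \<exists>v\<in>V. \<sigma> v = 1} = ?L"
  proof -
    have "1 \<in> {1..card V}" using fin ne by (simp add: Suc_leI card_gt_0_iff)
    then show ?thesis by (auto elim: linear_extension_position)
  qed
  finally show ?thesis by (simp add: num_linext_def)
qed

theorem lemma3p9:
  fixes V :: "'a set" and E :: "('a \<times> 'a) set"
  assumes "oriented_graph V E"
  shows "natural_flow V E (g_flow V E) \<and> net_flow V E (g_flow V E) = real (num_linext V E)"
proof -
  have EV: "E \<subseteq> V \<times> V" and fin: "finite V" and ne: "V \<noteq> {}"
    using assms by (auto simp: oriented_graph_def)
  have nonneg: "\<forall>e\<in>hat_edges V E. g_flow V E e \<ge> 0"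
    by (auto simp: g_flow_def split: prod.split hatv.split)
  have conservation: "\<forall>v\<in>V. (\<Sum>e\<in>{e\<in>hat_edges V E. snd e = Vtx v}. g_flow V E e)
                          = (\<Sum>e\<in>{e\<in>hat_edges V E. fst e = Vtx v}. g_flow V E e)"
  proof
    fix v assume v: "v \<in> V"
    show "(\<Sum>e\<in>{e\<in>hat_edges V E. snd e = Vtx v}. g_flow V E e)
        = (\<Sum>e\<in>{e\<in>hat_edges V E. fst e = Vtx v}. g_flow V E e)"
      by (simp only: g_inflow[OF EV fin v] g_outflow[OF EV fin v] local_balance[OF EV fin v])
  qed
  show ?thesis
    using nonneg conservation g_net_flow[OF EV fin ne] by (simp add: natural_flow_def)
qed

end
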